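(* Let $(E,\mathscr{T},\le)$ be a $T_2$-preordered Tychonoff space, let $\mathcal{F}$ be the family of continuous isotone functions $f:E\to[0,1]$, and assume $G(\le)=\bigcap_{f\in\mathcal{F}}G_f$. Let $\beta:E\to\beta E$ be the Stone–Čech compactification, and let $\tilde{\mathcal{F}}$ be the set of continuous functions $\tilde f:\beta E\to[0,1]$ which are the unique continuous extensions of $f\circ\beta^{-1}:\beta(E)\to[0,1]$, $f\in\mathcal{F}$. Define the relation $\le_\beta$ on $\beta E$ by $G(\le_\beta)=\bigcap_{\tilde f\in\tilde{\mathcal{F}}}G_{\tilde f}$. Then $(\beta E,\mathscr{T}_\beta,\le_\beta)$ (with $\mathscr{T}_\beta$ the Stone–Čech topology) is a Hausdorff $T_2$-preorder compactification of $(E,\mathscr{T},\le)$ via $\beta$, and it is the largest Hausdorff $T_2$-preorder compactification, i.e. it dominates every Hausdorff $T_2$-preorder compactification of $E$. Moreover, every continuous isotone function $f:E\to[0,1]$ extends to a continuous isotone function on $(\beta E,\le_\beta)$.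
   Context: A topological preordered space is a triple $(E,\mathscr{T},\le)$, $\le$ a preorder; it is $T_2$-preordered if $G(\le)=\{(x,y):x\le y\}$ is closed in $E\times E$. Isotone: $x\le y\Rightarrow f(x)\le f(y)$. For $f:X\to[0,1]$, $G_f=\{(x,y):f(x)\le f(y)\}$. A preorder embedding is an injective continuous isotone map which is a homeomorphism onto its image and whose inverse on the image (with induced preorder) is isotone. A preorder compactification of $E$ is a preorder embedding $c:E\to cE$ into a compact topological preordered space $(cE,\mathscr{T}_c,\le_c)$ with $c(E)$ dense; it is a Hausdorff $T_2$-preorder compactification if moreover $cE$ is Hausdorff and $\le_c$ has closed graph. For preorder compactifications, $c_1\le c_2$ ($c_2$ dominates $c_1$) means there is a continuous isotone $C:c_2E\to c_1E$ with $C\circ c_2=c_1$. *)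

theory Defs
  imports "HOL-Analysis.Analysis"
begin

definition preorder_on_space :: "'a topology \<Rightarrow> ('a \<Rightarrow> 'a \<Rightarrow> bool) \<Rightarrow> bool" where
  "preorder_on_space X le \<longleftrightarrow>
     (\<forall>x\<in>topspace X. le x x) \<and>
     (\<forall>x\<in>topspace X. \<forall>y\<in>topspace X. \<forall>z\<in>topspace X. le x y \<longrightarrow> le y z \<longrightarrow> le x z)"

definition rel_graph :: "'a topology \<Rightarrow> ('a \<Rightarrow> 'a \<Rightarrow> bool) \<Rightarrow> ('a \<times> 'a) set" where
  "rel_graph X le = {(x, y). x \<in> topspace X \<and> y \<in> topspace X \<and> le x y}"

definition T2_preordered :: "'a topology \<Rightarrow> ('a \<Rightarrow> 'a \<Rightarrow> bool) \<Rightarrow> bool" where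
  "T2_preordered X le \<longleftrightarrow> preorder_on_space X le \<and> closedin (prod_topology X X) (rel_graph X le)"

definition isotone_on :: "'a topology \<Rightarrow> ('a \<Rightarrow> 'a \<Rightarrow> bool) \<Rightarrow> ('b \<Rightarrow> 'b \<Rightarrow> bool) \<Rightarrow> ('a \<Rightarrow> 'b) \<Rightarrow> bool" where
  "isotone_on X le le' f \<longleftrightarrow> (\<forall>x\<in>topspace X. \<forall>y\<in>topspace X. le x y \<longrightarrow> le' (f x) (f y))"

definition cont_isotone_01 :: "'a topology \<Rightarrow> ('a \<Rightarrow> 'a \<Rightarrow> bool) \<Rightarrow> ('a \<Rightarrow> real) set" where
  "cont_isotone_01 X le =
     {f. continuous_map X (top_of_set {0..1}) f \<and> isotone_on X le (\<le>) f}"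

definition preorder_embedding ::
  "'a topology \<Rightarrow> ('a \<Rightarrow> 'a \<Rightarrow> bool) \<Rightarrow> 'b topology \<Rightarrow> ('b \<Rightarrow> 'b \<Rightarrow> bool) \<Rightarrow> ('a \<Rightarrow> 'b) \<Rightarrow> bool" where
  "preorder_embedding X le Y le' c \<longleftrightarrow>
     inj_on c (topspace X) \<and> continuous_map X Y c \<and> isotone_on X le le' c \<and>
     embedding_map X Y c \<and>
     (\<forall>x\<in>topspace X. \<forall>y\<in>topspace X. le' (c x) (c y) \<longrightarrow> le x y)"

definition preorder_compactification ::
  "'a topology \<Rightarrow> ('a \<Rightarrow> 'a \<Rightarrow> bool) \<Rightarrow> 'b topology \<Rightarrow> ('b \<Rightarrow> 'b \<Rightarrow> bool) \<Rightarrow> ('a \<Rightarrow> 'b) \<Rightarrow> bool" where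
  "preorder_compactification X le Y le' c \<longleftrightarrow>
     compact_space Y \<and> preorder_on_space Y le' \<and> preorder_embedding X le Y le' c \<and>
     Y closure_of (c ` topspace X) = topspace Y"

definition hausdorff_T2_preorder_compactification ::
  "'a topology \<Rightarrow> ('a \<Rightarrow> 'a \<Rightarrow> bool) \<Rightarrow> 'b topology \<Rightarrow> ('b \<Rightarrow> 'b \<Rightarrow> bool) \<Rightarrow> ('a \<Rightarrow> 'b) \<Rightarrow> bool" where
  "hausdorff_T2_preorder_compactification X le Y le' c \<longleftrightarrow>
     preorder_compactification X le Y le' c \<and> Hausdorff_space Y \<and> T2_preordered Y le'"

text \<open>c2 dominates c1 (c1 \<le> c2): a continuous isotone C : c2E \<rightarrow> c1E with C \<circ> c2 = c1.\<close>
definition dominates ::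
  "'a topology \<Rightarrow> 'b topology \<Rightarrow> ('b \<Rightarrow> 'b \<Rightarrow> bool) \<Rightarrow> ('a \<Rightarrow> 'b) \<Rightarrow>
   'c topology \<Rightarrow> ('c \<Rightarrow> 'c \<Rightarrow> bool) \<Rightarrow> ('a \<Rightarrow> 'c) \<Rightarrow> bool" where
  "dominates X Y2 le2 c2 Y1 le1 c1 \<longleftrightarrow>
     (\<exists>C. continuous_map Y2 Y1 C \<and> isotone_on Y2 le2 le1 C \<and> (\<forall>x\<in>topspace X. C (c2 x) = c1 x))"

definition tychonoff_space :: "'a topology \<Rightarrow> bool" where
  "tychonoff_space X \<longleftrightarrow> completely_regular_space X \<and> t1_space X"

definition stone_cech_compactification :: "'a topology \<Rightarrow> 'b topology \<Rightarrow> ('a \<Rightarrow> 'b) \<Rightarrow> bool" where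
  "stone_cech_compactification X B b \<longleftrightarrow>
     compact_space B \<and> Hausdorff_space B \<and> embedding_map X B b \<and>
     B closure_of (b ` topspace X) = topspace B \<and>
     (\<forall>f. continuous_map X (top_of_set {0..1::real}) f \<longrightarrow>
        (\<exists>g. continuous_map B (top_of_set {0..1}) g \<and> (\<forall>x\<in>topspace X. g (b x) = f x)))"

text \<open>The family \<tilde>F: continuous g : B \<rightarrow> [0,1] that extend f \<circ> b\<inverse> for some f \<in> F
  (such g is unique since B is Hausdorff and b(X) is dense).\<close>
definition extended_family ::
  "'a topology \<Rightarrow> ('a \<Rightarrow> real) set \<Rightarrow> 'b topology \<Rightarrow> ('a \<Rightarrow> 'b) \<Rightarrow> ('b \<Rightarrow> real) set" where
  "extended_family X F B b =
     {g. continuous_map B (top_of_set {0..1}) g \<and> (\<exists>f\<in>F. \<forall>x\<in>topspace X. g (b x) = f x)}"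

definition beta_order ::
  "'a topology \<Rightarrow> ('a \<Rightarrow> 'a \<Rightarrow> bool) \<Rightarrow> 'b topology \<Rightarrow> ('a \<Rightarrow> 'b) \<Rightarrow> 'b \<Rightarrow> 'b \<Rightarrow> bool" where
  "beta_order X le B b u v \<longleftrightarrow>
     (\<forall>g\<in>extended_family X (cont_isotone_01 X le) B b. g u \<le> g v)"

end

theory Submission
  imports Defs
begin

text \<open>
  The heart of the matter is Nachbin's separation theorem: on a compact Hausdorff space whose
  preorder has closed graph, \<open>x \<le> y\<close> fails only if some continuous isotone \<open>h\<close> into [0,1]
  has \<open>h y < h x\<close>.  It follows from an ordered Urysohn lemma, obtained by running the dyadic
  construction of Urysohn's lemma with open down-sets, which can be interpolated in a compact pospace.
  Given another Hausdorff T2-preorder compactification \<open>c : E \<rightarrow> C\<close>, extend \<open>c\<close> continuously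
  to \<open>\<Phi> : \<beta>E \<rightarrow> C\<close>.  If \<open>u \<le>\<^sub>\<beta> v\<close> but not \<open>\<Phi> u \<le> \<Phi> v\<close>, a separating \<open>h\<close> on \<open>C\<close> makes
  \<open>h \<circ> \<Phi>\<close> one of the functions defining \<open>\<le>\<^sub>\<beta>\<close>, a contradiction.  That \<open>\<beta>\<close> itself is a
  T2-preorder compactification is routine: \<open>\<le>\<^sub>\<beta>\<close> is an intersection of closed graphs, and it
  restricts to \<open>\<le>\<close> on \<open>\<beta>(E)\<close> because \<open>\<le>\<close> is determined by the continuous isotone functions.
\<close>

section \<open>Urysohn functions of dyadic families of open sets\<close>

lemma dyadics_dense:
  fixes a b :: real
  assumes "0 \<le> a" "a < b"
  obtains r where "r \<in> dyadics" "a < r" "r < b"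
proof -
  have "0 < (b - a) / 2" "(1::real) < 2" "0 < (a + b) / 2"
    using assms by auto
  then obtain n q r :: nat
    where qr: "q / 2^n < (a + b) / 2" "(a + b) / 2 < r / 2^n" "\<bar>q / 2^n - r / 2^n\<bar> < (b - a) / 2"
    by (rule padic_rational_approximation_straddle_pos)
  define x y where "x = real q / 2^n" and "y = real r / 2^n"
  have "x \<in> dyadics"
    by (auto simp: x_def dyadics_def)
  moreover have "a < x" "x < b"
    using qr[folded x_def y_def] by (simp_all add: abs_less_iff)
  ultimately show thesis
    using that by blast
qed

text \<open>The value is \<open>1\<close> at points lying in no \<open>G r\<close>, because \<open>1\<close> is inserted into the set.\<close>

definition urysohn_fun :: "(real \<Rightarrow> 'a set) \<Rightarrow> 'a \<Rightarrow> real" where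
  "urysohn_fun G x = Inf (insert 1 {r \<in> dyadics \<inter> {0..1}. x \<in> G r})"

lemma urysohn_fun_less_iff:
  "urysohn_fun G x < a \<longleftrightarrow> 1 < a \<or> (\<exists>r \<in> dyadics \<inter> {0..1}. x \<in> G r \<and> r < a)"
  unfolding urysohn_fun_def by (subst cInf_less_iff) (auto intro: bdd_belowI[of _ 0])

lemma urysohn_fun_le: "r \<in> dyadics \<inter> {0..1} \<Longrightarrow> x \<in> G r \<Longrightarrow> urysohn_fun G x \<le> r"
  unfolding urysohn_fun_def by (rule cInf_lower) (auto intro: bdd_belowI[of _ 0])

lemma urysohn_fun_ge:
  "c \<le> 1 \<Longrightarrow> (\<And>r. r \<in> dyadics \<inter> {0..1} \<Longrightarrow> x \<in> G r \<Longrightarrow> c \<le> r) \<Longrightarrow> c \<le> urysohn_fun G x"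
  unfolding urysohn_fun_def by (rule cInf_greatest) auto

lemma urysohn_fun_range: "urysohn_fun G x \<in> {0..1}"
proof -
  have "0 \<le> urysohn_fun G x"
    by (rule urysohn_fun_ge) auto
  moreover have "urysohn_fun G x \<le> 1"
    unfolding urysohn_fun_def by (rule cInf_lower) (auto intro: bdd_belowI[of _ 0])
  ultimately show ?thesis
    by simp
qed

lemma urysohn_fun_eq_0: "x \<in> G 0 \<Longrightarrow> urysohn_fun G x = 0"
  using urysohn_fun_le[of 0 x G] urysohn_fun_range[of G x] by (auto simp: dyadics_def)

lemma urysohn_fun_eq_1:
  "(\<And>r. r \<in> dyadics \<inter> {0..<1} \<Longrightarrow> x \<notin> G r) \<Longrightarrow> urysohn_fun G x = 1"
  using urysohn_fun_ge[of 1 x G] urysohn_fun_range[of G x] by fastforce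

lemma urysohn_fun_mono:
  "(\<And>r. r \<in> dyadics \<inter> {0..1} \<Longrightarrow> y \<in> G r \<Longrightarrow> x \<in> G r) \<Longrightarrow> urysohn_fun G x \<le> urysohn_fun G y"
  unfolding urysohn_fun_def by (rule cInf_superset_mono) (auto intro: bdd_belowI[of _ 0])

lemma urysohn_fun_greater_iff:
  assumes subG: "\<And>r. r \<in> dyadics \<inter> {0..1} \<Longrightarrow> G r \<subseteq> topspace X"
    and nested: "\<And>r s. \<lbrakk>r \<in> dyadics \<inter> {0..1}; s \<in> dyadics \<inter> {0..1}; r < s\<rbrakk>
                   \<Longrightarrow> X closure_of G r \<subseteq> G s"
  shows "a < urysohn_fun G x \<longleftrightarrow>
           a < 0 \<or> (\<exists>r \<in> dyadics \<inter> {0..1}. a < r \<and> x \<notin> X closure_of G r)"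
proof
  assume a: "a < urysohn_fun G x"
  show "a < 0 \<or> (\<exists>r \<in> dyadics \<inter> {0..1}. a < r \<and> x \<notin> X closure_of G r)"
  proof (cases "a < 0")
    case False
    obtain r where r: "r \<in> dyadics" "a < r" "r < urysohn_fun G x"
      using False a dyadics_dense by (metis not_less)
    then obtain s where s: "s \<in> dyadics" "r < s" "s < urysohn_fun G x"
      using False dyadics_dense by (metis not_less order.strict_trans)
    have "x \<notin> G s"
      using s urysohn_fun_le[of s x G] urysohn_fun_range[of G x] r False by force
    then show ?thesis
      using nested[of r s] r s False urysohn_fun_range[of G x] by fastforce
  qed simp
next
  assume "a < 0 \<or> (\<exists>r \<in> dyadics \<inter> {0..1}. a < r \<and> x \<notin> X closure_of G r)"
  then consider "a < 0" | r where "r \<in> dyadics \<inter> {0..1}" "a < r" "x \<notin> X closure_of G r"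
    by blast
  then show "a < urysohn_fun G x"
  proof cases
    case 1
    then show ?thesis
      using urysohn_fun_range[of G x] by auto
  next
    case 2
    have "r \<le> t" if "t \<in> dyadics \<inter> {0..1}" "x \<in> G t" for t
    proof (rule ccontr)
      assume "\<not> r \<le> t"
      then have "G t \<subseteq> X closure_of G r"
        using nested[OF that(1) 2(1)] closure_of_subset[OF subG[OF 2(1)]]
          closure_of_subset[OF subG[OF that(1)]] by (meson not_le subset_trans)
      with that 2 show False
        by blast
    qed
    then have "r \<le> urysohn_fun G x"
      using 2 by (auto intro: urysohn_fun_ge)
    with 2 show ?thesis
      by simp
  qed
qed

lemma continuous_map_urysohn_fun:
  assumes opens: "\<And>r. r \<in> dyadics \<inter> {0..1} \<Longrightarrow> openin X (G r)"
    and nested: "\<And>r s. \<lbrakk>r \<in> dyadics \<inter> {0..1}; s \<in> dyadics \<inter> {0..1}; r < s\<rbrakk>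
                   \<Longrightarrow> X closure_of G r \<subseteq> G s"
  shows "continuous_map X (top_of_set {0..1}) (urysohn_fun G)"
proof -
  have subG: "G r \<subseteq> topspace X" if "r \<in> dyadics \<inter> {0..1}" for r
    using opens[OF that] by (rule openin_subset)
  have less: "openin X {x \<in> topspace X. urysohn_fun G x < a}" for a
  proof -
    have "(\<Union>r \<in> dyadics \<inter> {0..1} \<inter> {..<a}. G r) \<subseteq> topspace X"
      using subG by blast
    then have "{x \<in> topspace X. urysohn_fun G x < a} =
          (if 1 < a then topspace X else \<Union>r \<in> dyadics \<inter> {0..1} \<inter> {..<a}. G r)"
      by (auto simp: urysohn_fun_less_iff)
    then show ?thesis
      using opens by (auto intro!: openin_Union)
  qed
  have greater: "openin X {x \<in> topspace X. a < urysohn_fun G x}" for a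
  proof -
    have "{x \<in> topspace X. a < urysohn_fun G x} =
          (if a < 0 then topspace X
           else \<Union>r \<in> dyadics \<inter> {0..1} \<inter> {a<..}. topspace X - X closure_of G r)"
      using urysohn_fun_greater_iff[OF subG nested] by auto
    moreover have "openin X (\<Union>r \<in> dyadics \<inter> {0..1} \<inter> {a<..}. topspace X - X closure_of G r)"
      by (intro openin_Union) auto
    ultimately show ?thesis
      by (metis openin_topspace)
  qed
  show ?thesis
    unfolding continuous_map_upper_lower_semicontinuous_lt_gen
    by (simp add: less greater urysohn_fun_range[unfolded atLeastAtMost_iff])
qed

section \<open>Compact spaces with a closed preorder\<close>

definition down_closure :: "'a topology \<Rightarrow> ('a \<Rightarrow> 'a \<Rightarrow> bool) \<Rightarrow> 'a set \<Rightarrow> 'a set" where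
  "down_closure X le S = {x \<in> topspace X. \<exists>y\<in>S. le x y}"

definition up_closure :: "'a topology \<Rightarrow> ('a \<Rightarrow> 'a \<Rightarrow> bool) \<Rightarrow> 'a set \<Rightarrow> 'a set" where
  "up_closure X le S = {y \<in> topspace X. \<exists>x\<in>S. le x y}"

definition downset :: "'a topology \<Rightarrow> ('a \<Rightarrow> 'a \<Rightarrow> bool) \<Rightarrow> 'a set \<Rightarrow> bool" where
  "downset X le S \<longleftrightarrow> S \<subseteq> topspace X \<and> (\<forall>y\<in>S. \<forall>x\<in>topspace X. le x y \<longrightarrow> x \<in> S)"

lemma closedin_down_closure:
  assumes "compact_space X" "closedin (prod_topology X X) (rel_graph X le)" "closedin X S"
  shows "closedin X (down_closure X le S)"
proof -
  have "down_closure X le S = fst ` (rel_graph X le \<inter> (topspace X \<times> S))"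
    using closedin_subset[OF assms(3)] by (force simp: down_closure_def rel_graph_def)
  moreover have "closedin (prod_topology X X) (rel_graph X le \<inter> (topspace X \<times> S))"
    using assms by (intro closedin_Int) (auto simp: closedin_prod_Times_iff)
  ultimately show ?thesis
    using closed_map_fst[OF assms(1), of X] by (simp add: closed_map_def)
qed

lemma closedin_up_closure:
  assumes "compact_space X" "closedin (prod_topology X X) (rel_graph X le)" "closedin X S"
  shows "closedin X (up_closure X le S)"
proof -
  have "up_closure X le S = snd ` (rel_graph X le \<inter> (S \<times> topspace X))"
    using closedin_subset[OF assms(3)] by (force simp: up_closure_def rel_graph_def)
  moreover have "closedin (prod_topology X X) (rel_graph X le \<inter> (S \<times> topspace X))"
    using assms by (intro closedin_Int) (auto simp: closedin_prod_Times_iff)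
  ultimately show ?thesis
    using closed_map_snd[OF assms(1), of X] by (simp add: closed_map_def)
qed

lemma downset_down_closure:
  "preorder_on_space X le \<Longrightarrow> S \<subseteq> topspace X \<Longrightarrow> downset X le (down_closure X le S)"
  unfolding preorder_on_space_def downset_def down_closure_def by blast

lemma downset_Diff_up_closure:
  "preorder_on_space X le \<Longrightarrow> S \<subseteq> topspace X \<Longrightarrow> downset X le (topspace X - up_closure X le S)"
  unfolding preorder_on_space_def downset_def up_closure_def by blast

lemma downset_interpolation:
  assumes X: "compact_space X" "Hausdorff_space X" "T2_preordered X le"
    and K: "closedin X K" "downset X le K" and W: "openin X W" "downset X le W" and "K \<subseteq> W"
  obtains V L where "openin X V" "downset X le V" "closedin X L" "downset X le L"
    "K \<subseteq> V" "V \<subseteq> L" "L \<subseteq> W"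
proof -
  have pre: "preorder_on_space X le" and graph: "closedin (prod_topology X X) (rel_graph X le)"
    using X(3) by (auto simp: T2_preordered_def)
  have "normal_space X"
    using X compact_Hausdorff_or_regular_imp_normal_space by blast
  moreover have "disjnt K (topspace X - W)"
    using \<open>K \<subseteq> W\<close> by (auto simp: disjnt_def)
  ultimately obtain O1 O2 where O: "openin X O1" "openin X O2" "K \<subseteq> O1" "topspace X - W \<subseteq> O2"
    "disjnt O1 O2"
    using K(1) W(1) unfolding normal_space_def by (metis closedin_diff closedin_topspace)
  define V where "V = topspace X - up_closure X le (topspace X - O1)"
  define L where "L = down_closure X le (topspace X - O2)"
  show thesis
  proof
    show "openin X V"
      unfolding V_def using O(1) by (intro openin_diff closedin_up_closure[OF X(1) graph]) auto
    show "downset X le V"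
      unfolding V_def by (simp add: downset_Diff_up_closure[OF pre])
    show "closedin X L"
      unfolding L_def using O(2) by (intro closedin_down_closure[OF X(1) graph]) auto
    show "downset X le L"
      unfolding L_def by (simp add: downset_down_closure[OF pre])
    show "K \<subseteq> V"
      using K(2) O(3) by (auto simp: V_def up_closure_def downset_def)
    show "V \<subseteq> L"
      using O(5) pre unfolding V_def L_def up_closure_def down_closure_def disjnt_def
        preorder_on_space_def by blast
    show "L \<subseteq> W"
      using W(2) O(4) unfolding L_def down_closure_def downset_def by blast
  qed
qed

lemma dyadic_downset_family:
  assumes X: "compact_space X" "Hausdorff_space X" "T2_preordered X le"
    and K: "closedin X K" "downset X le K" and W: "openin X W" "downset X le W" and "K \<subseteq> W"
  obtains G :: "real \<Rightarrow> 'a set"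
  where "\<And>r. r \<in> dyadics \<inter> {0..1} \<Longrightarrow> openin X (G r) \<and> downset X le (G r)"
    "\<And>r s. \<lbrakk>r \<in> dyadics \<inter> {0..1}; s \<in> dyadics \<inter> {0..1}; r < s\<rbrakk> \<Longrightarrow> X closure_of G r \<subseteq> G s"
    "K \<subseteq> G 0" "G 1 = W"
proof -
  text \<open>By \<open>downset_interpolation\<close> the relation \<open>R\<close> is dense, as the dyadic recursion requires.\<close>
  define R where "R A B \<longleftrightarrow> openin X A \<and> downset X le A \<and> openin X B \<and> downset X le B \<and>
      (\<exists>L. closedin X L \<and> downset X le L \<and> A \<subseteq> L \<and> L \<subseteq> B)" for A B
  obtain V L where "openin X V" "downset X le V" "closedin X L" "downset X le L"
    "K \<subseteq> V" "V \<subseteq> L" "L \<subseteq> W"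
    using downset_interpolation[OF X K W \<open>K \<subseteq> W\<close>] .
  then have "R V W"
    using W unfolding R_def by blast
  moreover have "\<exists>C. R A C \<and> R C B" if "R A B" for A B
  proof -
    from that obtain L where AB: "openin X A" "downset X le A" "openin X B" "downset X le B"
      and L: "closedin X L" "downset X le L" "A \<subseteq> L" "L \<subseteq> B"
      by (auto simp: R_def)
    obtain C L' where "openin X C" "downset X le C" "closedin X L'" "downset X le L'"
      "L \<subseteq> C" "C \<subseteq> L'" "L' \<subseteq> B"
      using downset_interpolation[OF X L(1,2) AB(3,4) L(4)] .
    with AB L have "R A C" "R C B"
      unfolding R_def by blast+
    then show ?thesis
      by blast
  qed
  moreover have "R A C" if "R A B" "R B C" for A B C
    using that unfolding R_def by blast
  ultimately have "\<exists>G :: real \<Rightarrow> 'a set. G 0 = V \<and> G 1 = W \<and>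
      (\<forall>r \<in> dyadics \<inter> {0..1}. \<forall>s \<in> dyadics \<inter> {0..1}. r < s \<longrightarrow> R (G r) (G s))"
    by (rule recursion_on_dyadic_fractions)
  then obtain G :: "real \<Rightarrow> 'a set" where G0: "G 0 = V" and G1: "G 1 = W"
    and GR: "\<forall>r \<in> dyadics \<inter> {0..1}. \<forall>s \<in> dyadics \<inter> {0..1}. r < s \<longrightarrow> R (G r) (G s)"
    by blast
  have one: "1 \<in> dyadics \<inter> {0..1::real}"
    by (auto simp: dyadics_def)
  show thesis
  proof
    show "openin X (G r) \<and> downset X le (G r)" if "r \<in> dyadics \<inter> {0..1}" for r
    proof (cases "r = 1")
      case True
      then show ?thesis
        using G1 W by simp
    next
      case False
      then show ?thesis
        using GR[rule_format, of r 1] that one by (auto simp: R_def)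
    qed
    show "X closure_of G r \<subseteq> G s"
      if "r \<in> dyadics \<inter> {0..1}" "s \<in> dyadics \<inter> {0..1}" "r < s" for r s
      using GR[rule_format, OF that] unfolding R_def by (meson closure_of_minimal subset_trans)
    show "K \<subseteq> G 0" "G 1 = W"
      using \<open>K \<subseteq> V\<close> G0 G1 by simp_all
  qed
qed

lemma ordered_Urysohn_lemma:
  assumes X: "compact_space X" "Hausdorff_space X" "T2_preordered X le"
    and K: "closedin X K" "downset X le K" and W: "openin X W" "downset X le W" and "K \<subseteq> W"
  obtains f where "f \<in> cont_isotone_01 X le" "\<And>x. x \<in> K \<Longrightarrow> f x = 0"
    "\<And>x. x \<in> topspace X - W \<Longrightarrow> f x = 1"
proof -
  obtain G :: "real \<Rightarrow> 'a set"
    where G: "\<And>r. r \<in> dyadics \<inter> {0..1} \<Longrightarrow> openin X (G r) \<and> downset X le (G r)"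
      and nested: "\<And>r s. \<lbrakk>r \<in> dyadics \<inter> {0..1}; s \<in> dyadics \<inter> {0..1}; r < s\<rbrakk>
                     \<Longrightarrow> X closure_of G r \<subseteq> G s"
      and G0: "K \<subseteq> G 0" and G1: "G 1 = W"
    using dyadic_downset_family[OF X K W \<open>K \<subseteq> W\<close>] by blast
  have G_below_W: "G r \<subseteq> W" if "r \<in> dyadics \<inter> {0..<1}" for r
  proof -
    have "1 \<in> dyadics \<inter> {0..1::real}" "r \<in> dyadics \<inter> {0..1}"
      using that by (auto simp: dyadics_def)
    then show ?thesis
      using nested[of r 1] closure_of_subset[of "G r" X] G that G1 by (auto simp: openin_subset)
  qed
  show thesis
  proof
    show "urysohn_fun G \<in> cont_isotone_01 X le"
      unfolding cont_isotone_01_def isotone_on_def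
    proof (intro CollectI conjI ballI impI)
      show "continuous_map X (top_of_set {0..1}) (urysohn_fun G)"
        using G nested by (intro continuous_map_urysohn_fun) auto
      show "urysohn_fun G x \<le> urysohn_fun G y" if "x \<in> topspace X" "y \<in> topspace X" "le x y" for x y
        using G that by (intro urysohn_fun_mono) (auto simp: downset_def)
    qed
    show "urysohn_fun G x = 0" if "x \<in> K" for x
      using that G0 by (intro urysohn_fun_eq_0) auto
    show "urysohn_fun G x = 1" if "x \<in> topspace X - W" for x
      using that G_below_W by (intro urysohn_fun_eq_1) auto
  qed
qed

lemma isotone_separation:
  assumes X: "compact_space X" "Hausdorff_space X" "T2_preordered X le"
    and "x \<in> topspace X" "y \<in> topspace X" "\<not> le x y"
  obtains f where "f \<in> cont_isotone_01 X le" "f y < f x"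
proof -
  have pre: "preorder_on_space X le" and graph: "closedin (prod_topology X X) (rel_graph X le)"
    using X(3) by (auto simp: T2_preordered_def)
  define K where "K = down_closure X le {y}"
  define W where "W = topspace X - up_closure X le {x}"
  have K: "closedin X K"
    unfolding K_def using assms
    by (intro closedin_down_closure graph) (auto intro: closedin_Hausdorff_singleton)
  have W: "openin X W"
    unfolding W_def using assms
    by (intro openin_diff closedin_up_closure graph) (auto intro: closedin_Hausdorff_singleton)
  have downsets: "downset X le K" "downset X le W"
    unfolding K_def W_def using assms by (auto intro: downset_down_closure downset_Diff_up_closure pre)
  have "K \<subseteq> W"
    using pre assms unfolding K_def W_def down_closure_def up_closure_def preorder_on_space_def
    by blast
  obtain f where f: "f \<in> cont_isotone_01 X le" "\<And>x. x \<in> K \<Longrightarrow> f x = 0"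
    "\<And>x. x \<in> topspace X - W \<Longrightarrow> f x = 1"
    using ordered_Urysohn_lemma[OF X K downsets(1) W downsets(2) \<open>K \<subseteq> W\<close>] by blast
  have "y \<in> K" "x \<in> topspace X - W"
    using pre assms unfolding K_def W_def down_closure_def up_closure_def preorder_on_space_def
    by blast+
  then show thesis
    using that f by simp
qed

section \<open>Extension along the Stone-Cech compactification\<close>

lemma embedding_map_imp_continuous_map: "embedding_map X Y f \<Longrightarrow> continuous_map X Y f"
  unfolding embedding_map_def by (metis continuous_map_in_subtopology homeomorphic_imp_continuous_map)

lemma stone_cech_extension_cube:
  assumes B: "stone_cech_compactification E B b"
    and h: "continuous_map E (product_topology (\<lambda>_. top_of_set {0..1::real}) K) h"
  obtains H where "continuous_map B (product_topology (\<lambda>_. top_of_set {0..1}) K) H"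
    "\<And>x. x \<in> topspace E \<Longrightarrow> H (b x) = h x"
proof -
  have "\<forall>k\<in>K. \<exists>g. continuous_map B (top_of_set {0..1}) g \<and> (\<forall>x\<in>topspace E. g (b x) = h x k)"
    using h B unfolding continuous_map_componentwise stone_cech_compactification_def by blast
  then obtain g where g: "\<And>k. k \<in> K \<Longrightarrow> continuous_map B (top_of_set {0..1}) (g k)"
    "\<And>k x. k \<in> K \<Longrightarrow> x \<in> topspace E \<Longrightarrow> g k (b x) = h x k"
    by metis
  show thesis
  proof
    show "continuous_map B (product_topology (\<lambda>_. top_of_set {0..1}) K) (\<lambda>u. \<lambda>k\<in>K. g k u)"
      using g(1) by (auto simp: continuous_map_componentwise)
    show "(\<lambda>k\<in>K. g k (b x)) = h x" if "x \<in> topspace E" for x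
    proof -
      have "h x \<in> extensional K"
        using h that by (auto simp: continuous_map_componentwise)
      then show ?thesis
        using that g(2) by (intro extensionalityI[where A = K]) auto
    qed
  qed
qed

text \<open>Embed \<open>C\<close> in a cube, extend coordinatewise, and come back to the image of \<open>C\<close>, which is
  closed and contains the image of the dense set \<open>b(E)\<close>.\<close>

lemma stone_cech_extension:
  assumes B: "stone_cech_compactification E B b"
    and C: "compact_space C" "Hausdorff_space C" and c: "continuous_map E C c"
  obtains \<Phi> where "continuous_map B C \<Phi>" "\<And>x. x \<in> topspace E \<Longrightarrow> \<Phi> (b x) = c x"
proof -
  have "completely_regular_space C"
    using C
    by (intro normal_imp_completely_regular_space compact_Hausdorff_or_regular_imp_normal_space) auto
  then obtain K :: "('c \<Rightarrow> real) set" and e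
    where e: "embedding_map C (product_topology (\<lambda>_. top_of_set {0..1::real}) K) e"
    using C(2) by (rule completely_regular_space_cube_embedding)
  define P where "P = product_topology (\<lambda>_. top_of_set {0..1::real}) K"
  have e_cont: "continuous_map C P e"
    unfolding P_def using e by (rule embedding_map_imp_continuous_map)
  obtain H where H: "continuous_map B P H" "\<And>x. x \<in> topspace E \<Longrightarrow> H (b x) = e (c x)"
    using stone_cech_extension_cube[OF B continuous_map_compose[OF c e_cont, unfolded P_def]]
    unfolding P_def by (metis comp_apply)
  have "Hausdorff_space P"
    by (simp add: P_def Hausdorff_space_product_topology Hausdorff_space_subtopology)
  moreover have "compactin P (e ` topspace C)"
    using C(1) e_cont by (simp add: compact_space_def image_compactin)
  ultimately have closed_image: "closedin P (e ` topspace C)"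
    by (simp add: compactin_imp_closedin)
  have "H ` topspace B \<subseteq> P closure_of (H ` b ` topspace E)"
    using continuous_map_image_closure_subset[OF H(1), of "b ` topspace E"] B
    by (simp add: stone_cech_compactification_def)
  also have "\<dots> \<subseteq> P closure_of (e ` topspace C)"
    using H(2) c by (intro closure_of_mono) (auto simp: continuous_map_def)
  also have "\<dots> = e ` topspace C"
    using closed_image by (simp add: closure_of_eq)
  finally have H_image: "H ` topspace B \<subseteq> e ` topspace C" .
  obtain e' where e': "homeomorphic_maps C (subtopology P (e ` topspace C)) e e'"
    using e by (auto simp: P_def embedding_map_def homeomorphic_map_maps)
  show thesis
  proof
    show "continuous_map B C (e' \<circ> H)"
      using e' H(1) H_image
      by (intro continuous_map_compose[where X' = "subtopology P (e ` topspace C)"])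
         (auto simp: homeomorphic_maps_def continuous_map_in_subtopology)
    show "(e' \<circ> H) (b x) = c x" if "x \<in> topspace E" for x
      using e' H(2)[OF that] c that by (auto simp: homeomorphic_maps_def continuous_map_def)
  qed
qed

section \<open>The preorder on the Stone-Cech compactification\<close>

lemma cont_isotone_01_compose:
  assumes c: "continuous_map X Y c" "isotone_on X le le' c" and h: "h \<in> cont_isotone_01 Y le'"
  shows "h \<circ> c \<in> cont_isotone_01 X le"
  unfolding cont_isotone_01_def
proof (intro CollectI conjI)
  show "continuous_map X (top_of_set {0..1}) (h \<circ> c)"
    using c(1) h by (auto simp: cont_isotone_01_def intro: continuous_map_compose)
  have "c x \<in> topspace Y" if "x \<in> topspace X" for x
    using c(1) that by (auto simp: continuous_map_def)
  then show "isotone_on X le (\<le>) (h \<circ> c)"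
    using c(2) h unfolding cont_isotone_01_def isotone_on_def by simp
qed

lemma closedin_rel_graph_Ball_le:
  assumes "\<And>g. g \<in> F \<Longrightarrow> continuous_map X euclideanreal g"
  shows "closedin (prod_topology X X) (rel_graph X (\<lambda>u v. \<forall>g\<in>F. g u \<le> g v))"
proof -
  let ?XX = "prod_topology X X"
  have "rel_graph X (\<lambda>u v. \<forall>g\<in>F. g u \<le> g v) =
        \<Inter> (insert (topspace ?XX) ((\<lambda>g. {z \<in> topspace ?XX. g (fst z) - g (snd z) \<in> {..0}}) ` F))"
    by (auto simp: rel_graph_def)
  moreover have "closedin ?XX {z \<in> topspace ?XX. g (fst z) - g (snd z) \<in> {..0}}" if "g \<in> F" for g
    using assms[OF that]
    by (intro closedin_continuous_map_preimage[where Y = euclideanreal] continuous_map_diff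
        continuous_map_compose[OF continuous_map_fst, unfolded o_def]
        continuous_map_compose[OF continuous_map_snd, unfolded o_def]) auto
  ultimately show ?thesis
    using closedin_topspace[of ?XX] by (simp only:) (rule closedin_Inter; auto)
qed

lemma beta_order_eq:
  "beta_order E le B b = (\<lambda>u v. \<forall>g\<in>extended_family E (cont_isotone_01 E le) B b. g u \<le> g v)"
  by (simp add: beta_order_def fun_eq_iff)

lemma T2_preordered_beta_order: "T2_preordered B (beta_order E le B b)"
  unfolding T2_preordered_def preorder_on_space_def beta_order_eq
proof (intro conjI closedin_rel_graph_Ball_le)
  show "continuous_map B euclideanreal g" if "g \<in> extended_family E (cont_isotone_01 E le) B b" for g
    using that by (simp add: extended_family_def continuous_map_in_subtopology)
qed (fastforce intro: order_trans)+

lemma isotone_on_extended_family: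
  "g \<in> extended_family E (cont_isotone_01 E le) B b \<Longrightarrow> isotone_on B (beta_order E le B b) (\<le>) g"
  by (simp add: isotone_on_def beta_order_def)

lemma stone_cech_extension_01:
  assumes B: "stone_cech_compactification E B b" and f: "f \<in> cont_isotone_01 E le"
  obtains g where "g \<in> extended_family E (cont_isotone_01 E le) B b"
    "\<And>x. x \<in> topspace E \<Longrightarrow> g (b x) = f x"
proof -
  have "continuous_map E (top_of_set {0..1}) f"
    using f by (simp add: cont_isotone_01_def)
  then obtain g where g: "continuous_map B (top_of_set {0..1}) g" "\<forall>x\<in>topspace E. g (b x) = f x"
    using B unfolding stone_cech_compactification_def by blast
  moreover from this have "g \<in> extended_family E (cont_isotone_01 E le) B b"
    using f unfolding extended_family_def by blast
  ultimately show thesis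
    using that by blast
qed

lemma stone_cech_isotone_extension:
  assumes "stone_cech_compactification E B b" "f \<in> cont_isotone_01 E le"
  shows "\<exists>g. continuous_map B (top_of_set {0..1}) g \<and> isotone_on B (beta_order E le B b) (\<le>) g
           \<and> (\<forall>x\<in>topspace E. g (b x) = f x)"
proof -
  obtain g where g: "g \<in> extended_family E (cont_isotone_01 E le) B b"
    "\<And>x. x \<in> topspace E \<Longrightarrow> g (b x) = f x"
    using stone_cech_extension_01[OF assms] by metis
  then show ?thesis
    using isotone_on_extended_family[OF g(1)] by (auto simp: extended_family_def)
qed

lemma beta_order_image_iff:
  assumes B: "stone_cech_compactification E B b" and xy: "x \<in> topspace E" "y \<in> topspace E"
  shows "beta_order E le B b (b x) (b y) \<longleftrightarrow> (\<forall>f\<in>cont_isotone_01 E le. f x \<le> f y)"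
proof
  assume le_beta: "beta_order E le B b (b x) (b y)"
  show "\<forall>f\<in>cont_isotone_01 E le. f x \<le> f y"
  proof
    fix f assume f: "f \<in> cont_isotone_01 E le"
    obtain g where g: "g \<in> extended_family E (cont_isotone_01 E le) B b"
      "\<And>x. x \<in> topspace E \<Longrightarrow> g (b x) = f x"
      using stone_cech_extension_01[OF B f] by metis
    from le_beta g(1) have "g (b x) \<le> g (b y)"
      unfolding beta_order_def by blast
    with g(2) xy show "f x \<le> f y"
      by simp
  qed
next
  assume le_F: "\<forall>f\<in>cont_isotone_01 E le. f x \<le> f y"
  show "beta_order E le B b (b x) (b y)"
    unfolding beta_order_def
  proof
    fix g assume "g \<in> extended_family E (cont_isotone_01 E le) B b"
    then obtain f where "f \<in> cont_isotone_01 E le" "\<forall>x\<in>topspace E. g (b x) = f x"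
      unfolding extended_family_def by blast
    with le_F xy show "g (b x) \<le> g (b y)"
      by simp
  qed
qed

lemma beta_compactification:
  assumes B: "stone_cech_compactification E B b"
    and le: "\<forall>x\<in>topspace E. \<forall>y\<in>topspace E. le x y \<longleftrightarrow> (\<forall>f\<in>cont_isotone_01 E le. f x \<le> f y)"
  shows "hausdorff_T2_preorder_compactification E le B (beta_order E le B b) b"
proof -
  have emb: "embedding_map E B b"
    using B by (simp add: stone_cech_compactification_def)
  have "le x y \<longleftrightarrow> beta_order E le B b (b x) (b y)" if "x \<in> topspace E" "y \<in> topspace E" for x y
    using le beta_order_image_iff[OF B that] that by blast
  then have "preorder_embedding E le B (beta_order E le B b) b"
    using emb by (simp add: preorder_embedding_def isotone_on_def embedding_map_imp_continuous_map
        embedding_map_def homeomorphic_imp_injective_map)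
  then show ?thesis
    using B T2_preordered_beta_order[of B E le b]
    by (simp add: hausdorff_T2_preorder_compactification_def preorder_compactification_def
        stone_cech_compactification_def T2_preordered_def)
qed

lemma beta_order_dominates:
  assumes B: "stone_cech_compactification E B b"
    and C: "hausdorff_T2_preorder_compactification E le C lec c"
  shows "dominates E B (beta_order E le B b) b C lec c"
proof -
  have C_space: "compact_space C" "Hausdorff_space C" "T2_preordered C lec"
    and c: "continuous_map E C c" "isotone_on E le lec c"
    using C by (simp_all add: hausdorff_T2_preorder_compactification_def
        preorder_compactification_def preorder_embedding_def)
  obtain \<Phi> where \<Phi>: "continuous_map B C \<Phi>" "\<And>x. x \<in> topspace E \<Longrightarrow> \<Phi> (b x) = c x"
    using stone_cech_extension[OF B C_space(1,2) c(1)] by blast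
  have "lec (\<Phi> u) (\<Phi> v)"
    if uv: "u \<in> topspace B" "v \<in> topspace B" "beta_order E le B b u v" for u v
  proof (rule ccontr)
    assume "\<not> lec (\<Phi> u) (\<Phi> v)"
    moreover have "\<Phi> u \<in> topspace C" "\<Phi> v \<in> topspace C"
      using \<Phi>(1) uv by (auto simp: continuous_map_def)
    ultimately obtain h where h: "h \<in> cont_isotone_01 C lec" "h (\<Phi> v) < h (\<Phi> u)"
      using isotone_separation[OF C_space] by metis
    have "h \<circ> \<Phi> \<in> extended_family E (cont_isotone_01 E le) B b"
      unfolding extended_family_def
    proof (intro CollectI conjI bexI)
      show "continuous_map B (top_of_set {0..1}) (h \<circ> \<Phi>)"
        using \<Phi>(1) h(1) by (auto simp: cont_isotone_01_def intro: continuous_map_compose)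
      show "h \<circ> c \<in> cont_isotone_01 E le"
        using c h(1) by (rule cont_isotone_01_compose)
      show "\<forall>x\<in>topspace E. (h \<circ> \<Phi>) (b x) = (h \<circ> c) x"
        using \<Phi>(2) by simp
    qed
    then have "(h \<circ> \<Phi>) u \<le> (h \<circ> \<Phi>) v"
      using uv(3) unfolding beta_order_def by blast
    with h(2) show False
      by simp
  qed
  then show ?thesis
    using \<Phi> by (auto simp: dominates_def isotone_on_def)
qed

theorem mainTheorem4:
  fixes E :: "'a topology" and le :: "'a \<Rightarrow> 'a \<Rightarrow> bool"
    and B :: "'b topology" and b :: "'a \<Rightarrow> 'b"
  assumes "tychonoff_space E"
    and "T2_preordered E le"
    and "\<forall>x\<in>topspace E. \<forall>y\<in>topspace E.
           le x y \<longleftrightarrow> (\<forall>f\<in>cont_isotone_01 E le. f x \<le> f y)"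
    and "stone_cech_compactification E B b"
  shows "hausdorff_T2_preorder_compactification E le B (beta_order E le B b) b
    \<and> (\<forall>(C :: 'c topology) lec c. hausdorff_T2_preorder_compactification E le C lec c \<longrightarrow>
          dominates E B (beta_order E le B b) b C lec c)
    \<and> (\<forall>f\<in>cont_isotone_01 E le. \<exists>g. continuous_map B (top_of_set {0..1}) g
          \<and> isotone_on B (beta_order E le B b) (\<le>) g
          \<and> (\<forall>x\<in>topspace E. g (b x) = f x))"
proof -
  show ?thesis
    using beta_compactification[OF assms(4,3)] beta_order_dominates[OF assms(4)]
      stone_cech_isotone_extension[OF assms(4)] by blast
qed

end
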